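(* Let $a,b,e\in\mathbb Z$ with $a\neq0$, $e>0$, such that $h_2(j)=aj^2+bj+e$ satisfies $h_2(j)\ge0$ for all integers $j\ge0$ (so $h_2\in\mathcal H_0$). Then $\operatorname{hdepth}(h_2)\le 13$.
   Context: Let $\mathcal H_0$ denote the set of functions $h:\mathbb Z_{\ge 0}\to\mathbb Z_{\ge 0}$ with $h(0)>0$. For $h\in\mathcal H_0$ and integers $0\le k\le d$, put $\beta_k^d(h)=\sum_{j=0}^k(-1)^{k-j}\binom{d-j}{k-j}h(j)$. The Hilbert depth of $h$ is $\operatorname{hdepth}(h)=\max\{d\in\mathbb Z_{\ge0}:\ \beta_k^d(h)\ge 0\text{ for all }0\le k\le d\}$; this set contains $d=0$ and is known to be bounded above by $\lfloor h(1)/h(0)\rfloor$, so the maximum exists. *)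

theory Defs
  imports Main
begin

text \<open>Functions h : Z>=0 -> Z>=0 are modelled as nat => nat.\<close>

definition beta :: "(nat \<Rightarrow> nat) \<Rightarrow> nat \<Rightarrow> nat \<Rightarrow> int" where
  "beta h d k = (\<Sum>j\<le>k. (-1) ^ (k - j) * int ((d - j) choose (k - j)) * int (h j))"

definition hdepth :: "(nat \<Rightarrow> nat) \<Rightarrow> nat" where
  "hdepth h = (GREATEST d. \<forall>k\<le>d. beta h d k \<ge> 0)"

end

theory Submission
  imports Defs
begin

text \<open>
  Writing \<open>\<beta>(d,k)\<close> for \<open>\<beta>\<^sub>k\<^sup>d(h)\<close>, Pascal's rule gives
  \<open>\<beta>(d+1,k+1) = \<beta>(d,k+1) - \<beta>(d,k)\<close>, so if all \<open>\<beta>(d+1,_)\<close> are nonnegative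
  then so are all \<open>\<beta>(d,_)\<close>. A Hilbert depth of at least 14 therefore forces
  \<open>\<beta>(14,1), \<beta>(14,4), \<beta>(14,5) \<ge> 0\<close>. For \<open>h(j) = aj\<^sup>2 + bj + e\<close> these are
  linear forms in \<open>a, b, e\<close> with \<open>105 \<beta>(14,1) + 5 \<beta>(14,4) + 2 \<beta>(14,5) = -30a - 432e\<close>,
  which is negative since \<open>e > 0\<close> and \<open>a \<ge> 0\<close> (a quadratic that is nonnegative
  on \<open>\<nat>\<close> has nonnegative leading coefficient).
\<close>

lemma beta_0_right: "beta h d 0 = int (h 0)"
  by (simp add: beta_def)

lemma beta_Suc_Suc:
  assumes "k < d"
  shows "beta h (Suc d) (Suc k) = beta h d (Suc k) - beta h d k"
proof -
  have termwise: "(-1) ^ (Suc k - j) * int ((Suc d - j) choose (Suc k - j)) * int (h j) =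
        (-1) ^ (Suc k - j) * int ((d - j) choose (Suc k - j)) * int (h j) -
        (-1) ^ (k - j) * int ((d - j) choose (k - j)) * int (h j)" if "j \<le> k" for j
  proof -
    have "Suc d - j = Suc (d - j)" "Suc k - j = Suc (k - j)"
      using that assms by auto
    then show ?thesis by (simp add: algebra_simps)
  qed
  have "(\<Sum>j\<le>k. (-1) ^ (Suc k - j) * int ((Suc d - j) choose (Suc k - j)) * int (h j))
     = (\<Sum>j\<le>k. (-1) ^ (Suc k - j) * int ((d - j) choose (Suc k - j)) * int (h j))
       - beta h d k"
    unfolding beta_def sum_subtractf[symmetric] using termwise by (intro sum.cong) auto
  with assms show ?thesis
    by (simp add: beta_def)
qed

lemma beta_nonneg_Suc_imp:
  assumes "\<forall>k\<le>Suc d. beta h (Suc d) k \<ge> 0"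
  shows "\<forall>k\<le>d. beta h d k \<ge> 0"
proof (intro allI impI)
  fix k assume "k \<le> d"
  then show "beta h d k \<ge> 0"
  proof (induction k)
    case 0
    then show ?case by (simp add: beta_0_right)
  next
    case (Suc k)
    then have "beta h d (Suc k) = beta h (Suc d) (Suc k) + beta h d k"
      using beta_Suc_Suc[of k d h] by simp
    moreover have "beta h (Suc d) (Suc k) \<ge> 0"
      using assms Suc.prems by simp
    ultimately show ?case
      using Suc by simp
  qed
qed

lemma beta_nonneg_mono:
  assumes "d \<le> d'" and "\<forall>k\<le>d'. beta h d' k \<ge> 0"
  shows "\<forall>k\<le>d. beta h d k \<ge> 0"
  using assms
  by (induction d' rule: dec_induct) (auto dest: beta_nonneg_Suc_imp)

lemma hdepth_le:
  assumes "\<And>d. \<forall>k\<le>d. beta h d k \<ge> 0 \<Longrightarrow> d \<le> n"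
  shows "hdepth h \<le> n"
proof -
  have "\<forall>k\<le>0. beta h 0 k \<ge> 0"
    by (simp add: beta_0_right)
  then have "\<forall>k\<le>hdepth h. beta h (hdepth h) k \<ge> 0"
    unfolding hdepth_def by (rule GreatestI_nat) (use assms in blast)
  then show ?thesis
    by (rule assms)
qed

lemma quadratic_nonneg_on_nat_imp_leading_nonneg:
  fixes a b e :: int
  assumes "\<forall>j::nat. a * int j ^ 2 + b * int j + e \<ge> 0"
  shows "a \<ge> 0"
proof (rule ccontr)
  assume "\<not> a \<ge> 0"
  define x where "x = \<bar>b\<bar> + \<bar>e\<bar> + 1"
  have "x \<ge> 1" unfolding x_def by simp
  have "a * x ^ 2 \<le> - (x * x)"
    using mult_right_mono[of a "-1" "x * x"] \<open>\<not> a \<ge> 0\<close> by (simp add: power2_eq_square)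
  moreover have "b * x \<le> \<bar>b\<bar> * x" "e \<le> \<bar>e\<bar> * x"
    using \<open>x \<ge> 1\<close> mult_left_mono[of 1 x "\<bar>e\<bar>"] abs_ge_self[of e]
    by (simp_all add: mult_right_mono)
  moreover have "x * x = \<bar>b\<bar> * x + \<bar>e\<bar> * x + x"
    unfolding x_def by (simp add: algebra_simps)
  ultimately have "a * x ^ 2 + b * x + e < 0"
    using \<open>x \<ge> 1\<close> by linarith
  moreover have "int (nat x) = x"
    using \<open>x \<ge> 1\<close> by simp
  ultimately show False
    using assms by (metis not_le)
qed

lemma beta_14_quadratic:
  fixes a b e :: int
  assumes "\<And>j. int (h j) = a * int j ^ 2 + b * int j + e"
  shows "beta h 14 1 = a + b - 13 * e"
    and "beta h 14 4 = -105 * a - 183 * b + 771 * e"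
    and "beta h 14 5 = 195 * a + 405 * b - 1461 * e"
  unfolding beta_def assms
  by (simp_all add: atMost_Suc numeral_eq_Suc power2_eq_square)

theorem corollary2p10:
  fixes a b e :: int
  assumes "a \<noteq> 0" and "e > 0"
    and "\<forall>j::nat. a * int j ^ 2 + b * int j + e \<ge> 0"
  shows "hdepth (\<lambda>j. nat (a * int j ^ 2 + b * int j + e)) \<le> 13"
proof (rule hdepth_le)
  let ?h = "\<lambda>j. nat (a * int j ^ 2 + b * int j + e)"
  have h: "int (?h j) = a * int j ^ 2 + b * int j + e" for j
    using assms(3) by simp
  have "a \<ge> 0"
    using assms(3) by (rule quadratic_nonneg_on_nat_imp_leading_nonneg)
  fix d assume nonneg: "\<forall>k\<le>d. beta ?h d k \<ge> 0"
  show "d \<le> 13"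
  proof (rule ccontr)
    assume "\<not> d \<le> 13"
    then have "\<forall>k\<le>14. beta ?h 14 k \<ge> 0"
      using beta_nonneg_mono[of 14 d] nonneg by simp
    then have "beta ?h 14 1 \<ge> 0" "beta ?h 14 4 \<ge> 0" "beta ?h 14 5 \<ge> 0"
      by simp_all
    then show False
      using beta_14_quadratic[OF h] \<open>a \<ge> 0\<close> \<open>e > 0\<close> by linarith
  qed
qed

end
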